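(* Let $\mathcal C$ be a full trio. If the simultaneous unboundedness problem is decidable for $\mathcal C$, then the diagonal problem is decidable for $\mathcal C$.
   Context: A full trio is a nonempty class of (effectively represented) languages effectively closed under $B$-projection (keeping only symbols of $B$), $B$-upward closure (inserting arbitrary symbols of $B$), for every finite alphabet $B$, and under intersection with regular languages. For $A=\{a_1,\dots,a_n\}$ the Parikh image of $w$ is $(\#_{a_1}(w),\dots,\#_{a_n}(w))$. The diagonal problem: given $L\subseteq A^*$ in $\mathcal C$, decide whether every tuple $(m,\dots,m)\in\mathbb N^n$ is componentwise dominated by the Parikh image of some word of $L$. The SUP is this problem restricted to inputs $L\subseteq b_1^*\cdots b_n^*$ where $b_1,\dots,b_n$ is some enumeration of $A$. *)

theory Defs
  imports Main "HOL-Library.Nat_Bijection"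
begin

datatype recf = Zr | Sc | Id nat | Cn recf "recf list" | Pr recf recf | Mn recf

inductive rec_eval :: "recf \<Rightarrow> nat list \<Rightarrow> nat \<Rightarrow> bool" where
  zero: "rec_eval Zr xs 0"
| succ: "rec_eval Sc (x # xs) (Suc x)"
| proj: "i < length xs \<Longrightarrow> rec_eval (Id i) xs (xs ! i)"
| comp: "length ys = length gs \<Longrightarrow> (\<forall>i < length gs. rec_eval (gs ! i) xs (ys ! i))
          \<Longrightarrow> rec_eval f ys z \<Longrightarrow> rec_eval (Cn f gs) xs z"
| pr0: "rec_eval f xs y \<Longrightarrow> rec_eval (Pr f g) (0 # xs) y"
| prS: "rec_eval (Pr f g) (n # xs) y \<Longrightarrow> rec_eval g (n # y # xs) z
          \<Longrightarrow> rec_eval (Pr f g) (Suc n # xs) z"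
| mn: "rec_eval f (n # xs) 0 \<Longrightarrow> (\<forall>m < n. \<exists>y. y > 0 \<and> rec_eval f (m # xs) y)
          \<Longrightarrow> rec_eval (Mn f) xs n"

definition comp_on :: "nat set \<Rightarrow> (nat \<Rightarrow> nat) \<Rightarrow> bool" where
  "comp_on D f \<longleftrightarrow> (\<exists>p. \<forall>x\<in>D. rec_eval p [x] (f x))"

definition decidable_on :: "nat set \<Rightarrow> (nat \<Rightarrow> bool) \<Rightarrow> bool" where
  "decidable_on D P \<longleftrightarrow> (\<exists>f. comp_on D f \<and> (\<forall>x\<in>D. f x \<noteq> 0 \<longleftrightarrow> P x))"

type_synonym lang = "nat list set"

definition proj_lang :: "nat set \<Rightarrow> lang \<Rightarrow> lang" where
  "proj_lang B L = (filter (\<lambda>a. a \<in> B)) ` L"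

definition upclose_lang :: "nat set \<Rightarrow> lang \<Rightarrow> lang" where
  "upclose_lang B L = {w. \<exists>u\<in>L. \<exists>v. set v \<subseteq> B \<and> w \<in> shuffles u v}"

definition trip_decode :: "nat \<Rightarrow> nat \<times> nat \<times> nat" where
  "trip_decode t = (let (q, r) = prod_decode t; (a, q') = prod_decode r in (q, a, q'))"

definition nfa_trans :: "nat \<Rightarrow> (nat \<times> nat \<times> nat) set" where
  "nfa_trans c = trip_decode ` set_decode (fst (prod_decode c))"
definition nfa_init :: "nat \<Rightarrow> nat set" where
  "nfa_init c = set_decode (fst (prod_decode (snd (prod_decode c))))"
definition nfa_final :: "nat \<Rightarrow> nat set" where
  "nfa_final c = set_decode (snd (prod_decode (snd (prod_decode c))))"

fun reach :: "(nat \<times> nat \<times> nat) set \<Rightarrow> nat set \<Rightarrow> nat list \<Rightarrow> nat set" where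
  "reach T S [] = S"
| "reach T S (a # w) = reach T {q'. \<exists>q\<in>S. (q, a, q') \<in> T} w"

definition nfa_lang :: "nat \<Rightarrow> lang" where
  "nfa_lang c = {w. reach (nfa_trans c) (nfa_init c) w \<inter> nfa_final c \<noteq> {}}"

text \<open>An effectively represented class of languages: R is the set of valid
  representations (codes), lang r the language represented by r.\<close>
definition full_trio :: "nat set \<Rightarrow> (nat \<Rightarrow> lang) \<Rightarrow> bool" where
  "full_trio R lang \<longleftrightarrow>
     R \<noteq> {} \<and>
     (\<forall>r\<in>R. \<exists>A. finite A \<and> lang r \<subseteq> lists A) \<and>
     (\<exists>f. comp_on {prod_encode (r, set_encode B) | r B. r \<in> R \<and> finite B} f \<and>
        (\<forall>r\<in>R. \<forall>B. finite B \<longrightarrow> f (prod_encode (r, set_encode B)) \<in> R \<and>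
            lang (f (prod_encode (r, set_encode B))) = proj_lang B (lang r))) \<and>
     (\<exists>f. comp_on {prod_encode (r, set_encode B) | r B. r \<in> R \<and> finite B} f \<and>
        (\<forall>r\<in>R. \<forall>B. finite B \<longrightarrow> f (prod_encode (r, set_encode B)) \<in> R \<and>
            lang (f (prod_encode (r, set_encode B))) = upclose_lang B (lang r))) \<and>
     (\<exists>f. comp_on {prod_encode (r, c) | r c. r \<in> R} f \<and>
        (\<forall>r\<in>R. \<forall>c. f (prod_encode (r, c)) \<in> R \<and>
            lang (f (prod_encode (r, c))) = lang r \<inter> nfa_lang c))"

definition diag_inputs :: "nat set \<Rightarrow> (nat \<Rightarrow> lang) \<Rightarrow> nat set" where
  "diag_inputs R lang = {prod_encode (r, set_encode A) | r A.
      r \<in> R \<and> finite A \<and> lang r \<subseteq> lists A}"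

definition diag_answer :: "(nat \<Rightarrow> lang) \<Rightarrow> nat \<Rightarrow> bool" where
  "diag_answer lang x = (let (r, c) = prod_decode x; A = set_decode c in
      \<forall>m::nat. \<exists>w\<in>lang r. \<forall>a\<in>A. m \<le> count_list w a)"

fun bounded_lang :: "nat list \<Rightarrow> lang" where
  "bounded_lang [] = {[]}"
| "bounded_lang (b # bs) = {replicate k b @ w | k w. w \<in> bounded_lang bs}"

definition sup_inputs :: "nat set \<Rightarrow> (nat \<Rightarrow> lang) \<Rightarrow> nat set" where
  "sup_inputs R lang = {prod_encode (r, set_encode A) | r A.
      r \<in> R \<and> finite A \<and> lang r \<subseteq> lists A \<and>
      (\<exists>bs. distinct bs \<and> set bs = A \<and> lang r \<subseteq> bounded_lang bs)}"

end

theory Submission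
  imports Defs
begin

text \<open>A language \<open>L \<subseteq> A\<^sup>*\<close> with \<open>|A| = n\<close> is diagonal iff for some enumeration
  \<open>b\<^sub>1, \<dots>, b\<^sub>n\<close> of \<open>A\<close> and every \<open>m\<close>, some word of \<open>L\<close> has consecutive factors
  \<open>w\<^sub>1, \<dots>, w\<^sub>n\<close> with at least \<open>m\<close> letters \<open>b\<^sub>j\<close> in \<open>w\<^sub>j\<close>: a word in which every letter occurs
  \<open>n m\<close> times is cut greedily, and as there are only finitely many enumerations, one of them works
  for all \<open>m\<close>. For a fixed enumeration, the full trio operations turn \<open>L\<close> into a language in
  \<open>c\<^sub>1\<^sup>* \<cdots> c\<^sub>n\<^sup>*\<close>: insert fresh markers \<open>c\<^sub>j\<close> after occurrences of \<open>b\<^sub>j\<close>, intersect with a finite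
  automaton forcing the markers to appear in this order, and erase all other letters. This SUP
  instance is positive if the enumeration works, and only if \<open>L\<close> is diagonal, since every marker
  \<open>c\<^sub>j\<close> is paid for by an occurrence of \<open>b\<^sub>j\<close>. So the diagonal problem is decided by finitely many
  calls of the SUP procedure, one for each candidate enumeration.\<close>

section \<open>Computable functions\<close>

lemma rec_eval_Id_nth: "i < length xs \<Longrightarrow> z = xs ! i \<Longrightarrow> rec_eval (Id i) xs z"
  using rec_eval.proj by simp

lemma rec_eval_Sc_eq: "z = Suc x \<Longrightarrow> rec_eval Sc (x # xs) z"
  using rec_eval.succ by simp

lemma rec_eval_Cn1: "rec_eval g xs y \<Longrightarrow> rec_eval f [y] z \<Longrightarrow> rec_eval (Cn f [g]) xs z"
  by (rule rec_eval.comp[where ys="[y]"]) auto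

lemma rec_eval_Cn2:
  "rec_eval g xs y \<Longrightarrow> rec_eval h xs y' \<Longrightarrow> rec_eval f [y, y'] z \<Longrightarrow> rec_eval (Cn f [g, h]) xs z"
  by (rule rec_eval.comp[where ys="[y, y']"]) (auto simp: less_Suc_eq nth_Cons')

lemma rec_eval_Pr_iterate:
  assumes "rec_eval f xs (h 0)" and "\<And>k. k < n \<Longrightarrow> rec_eval g (k # h k # xs) (h (Suc k))"
  shows "rec_eval (Pr f g) (n # xs) (h n)"
  using assms(2) by (induction n) (auto intro: rec_eval.pr0[OF assms(1)] rec_eval.prS)

definition computable2 :: "(nat \<Rightarrow> nat \<Rightarrow> nat) \<Rightarrow> bool" where
  "computable2 g \<longleftrightarrow> (\<exists>p. \<forall>x y. rec_eval p [x, y] (g x y))"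

lemma computable2E:
  assumes "computable2 g" obtains p where "\<And>x y z. z = g x y \<Longrightarrow> rec_eval p [x, y] z"
  using assms unfolding computable2_def by blast

lemma computable2_add: "computable2 (+)"
  unfolding computable2_def
proof (intro exI allI)
  fix x y :: nat
  show "rec_eval (Pr (Id 0) (Cn Sc [Id 1])) [x, y] (x + y)"
    by (rule rec_eval_Pr_iterate[where h="\<lambda>k. k + y"])
      (auto intro!: rec_eval_Id_nth rec_eval_Cn1 rec_eval_Sc_eq)
qed

lemma computable2_mult: "computable2 (*)"
proof -
  obtain p where p: "\<And>x y z. z = x + y \<Longrightarrow> rec_eval p [x, y] z"
    using computable2_add computable2E by blast
  have "rec_eval (Pr Zr (Cn p [Id 1, Id 2])) [x, y] (x * y)" for x y
    by (rule rec_eval_Pr_iterate[where h="\<lambda>k. k * y"])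
      (auto intro!: rec_eval.zero rec_eval_Cn2 rec_eval_Id_nth p)
  then show ?thesis unfolding computable2_def by blast
qed

lemma computable2_diff: "computable2 (-)"
proof -
  define pred where "pred = Pr Zr (Id 0)"
  have pred: "rec_eval pred [k] z" if "z = k - 1" for k z
    unfolding pred_def that
    by (rule rec_eval_Pr_iterate[where h="\<lambda>k. k - 1"]) (auto intro!: rec_eval.zero rec_eval_Id_nth)
  have "rec_eval (Pr (Id 0) (Cn pred [Id 1])) [n, x] (x - n)" for n x
    by (rule rec_eval_Pr_iterate[where h="\<lambda>k. x - k"]) (auto intro!: rec_eval_Id_nth rec_eval_Cn1 pred)
  then have "rec_eval (Cn (Pr (Id 0) (Cn pred [Id 1])) [Id 1, Id 0]) [x, y] (x - y)" for x y
    by (auto intro!: rec_eval_Cn2 rec_eval_Id_nth)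
  then show ?thesis unfolding computable2_def by blast
qed

lemma computable2_power: "computable2 (^)"
proof -
  obtain p where p: "\<And>x y z. z = x * y \<Longrightarrow> rec_eval p [x, y] z"
    using computable2_mult computable2E by blast
  have "rec_eval (Pr (Cn Sc [Zr]) (Cn p [Id 1, Id 2])) [n, b] (b ^ n)" for n b
    by (rule rec_eval_Pr_iterate[where h="\<lambda>k. b ^ k"])
      (auto intro!: rec_eval_Cn1 rec_eval_Cn2 rec_eval.zero rec_eval_Sc_eq rec_eval_Id_nth p)
  then have "rec_eval (Cn (Pr (Cn Sc [Zr]) (Cn p [Id 1, Id 2])) [Id 1, Id 0]) [x, y] (x ^ y)" for x y
    by (auto intro!: rec_eval_Cn2 rec_eval_Id_nth)
  then show ?thesis unfolding computable2_def by blast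
qed

lemma comp_on_triangle_UNIV: "comp_on UNIV triangle"
proof -
  obtain p where p: "\<And>x y z. z = x + y \<Longrightarrow> rec_eval p [x, y] z"
    using computable2_add computable2E by blast
  have "rec_eval (Pr Zr (Cn p [Id 1, Cn Sc [Id 0]])) [n] (triangle n)" for n
    by (rule rec_eval_Pr_iterate[where h=triangle])
      (auto intro!: rec_eval.zero rec_eval_Cn1 rec_eval_Cn2 rec_eval_Sc_eq rec_eval_Id_nth p)
  then show ?thesis unfolding comp_on_def by blast
qed

lemma computable2_prod_encode: "computable2 (\<lambda>x y. prod_encode (x, y))"
proof -
  obtain p where p: "\<And>x y z. z = x + y \<Longrightarrow> rec_eval p [x, y] z"
    using computable2_add computable2E by blast
  obtain t where t: "\<And>n. rec_eval t [n] (triangle n)"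
    using comp_on_triangle_UNIV unfolding comp_on_def by blast
  have "rec_eval (Cn p [Cn t [Cn p [Id 0, Id 1]], Id 0]) [x, y] (prod_encode (x, y))" for x y
    by (auto intro!: rec_eval_Cn1 rec_eval_Cn2 rec_eval_Id_nth t p simp: prod_encode_def)
  then show ?thesis unfolding computable2_def by blast
qed

lemma rec_eval_const: "\<exists>p. \<forall>xs. rec_eval p xs c"
proof (induction c)
  case 0
  show ?case using rec_eval.zero by blast
next
  case (Suc c)
  then obtain p where "\<forall>xs. rec_eval p xs c" by blast
  then have "rec_eval (Cn Sc [p]) xs (Suc c)" for xs by (auto intro!: rec_eval_Cn1 rec_eval_Sc_eq)
  then show ?case by blast
qed

lemma computable2_const: "computable2 (\<lambda>x y. c)"
  unfolding computable2_def using rec_eval_const by blast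

lemma computable2_fst: "computable2 (\<lambda>x y. x)"
  unfolding computable2_def by (auto intro!: exI[of _ "Id 0"] rec_eval_Id_nth)

lemma computable2_snd: "computable2 (\<lambda>x y. y)"
  unfolding computable2_def by (auto intro!: exI[of _ "Id 1"] rec_eval_Id_nth)

lemma computable2_compose:
  assumes "computable2 f" "computable2 g" "computable2 h"
  shows "computable2 (\<lambda>x y. f (g x y) (h x y))"
proof -
  obtain pf pg ph where "\<And>x y z. z = f x y \<Longrightarrow> rec_eval pf [x, y] z"
    and "\<And>x y z. z = g x y \<Longrightarrow> rec_eval pg [x, y] z" and "\<And>x y z. z = h x y \<Longrightarrow> rec_eval ph [x, y] z"
    using assms computable2E by metis
  then have "rec_eval (Cn pf [pg, ph]) [x, y] (f (g x y) (h x y))" for x y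
    by (auto intro!: rec_eval_Cn2)
  then show ?thesis unfolding computable2_def by blast
qed

lemma comp_onE: assumes "comp_on D f" obtains p where "\<And>x. x \<in> D \<Longrightarrow> rec_eval p [x] (f x)"
  using assms unfolding comp_on_def by blast

lemma computable2_compose1:
  assumes "comp_on UNIV f" "computable2 g"
  shows "computable2 (\<lambda>x y. f (g x y))"
proof -
  obtain pf pg where "\<And>x. rec_eval pf [x] (f x)" and "\<And>x y z. z = g x y \<Longrightarrow> rec_eval pg [x, y] z"
    using assms comp_onE computable2E by (metis UNIV_I)
  then have "rec_eval (Cn pf [pg]) [x, y] (f (g x y))" for x y by (auto intro!: rec_eval_Cn1)
  then show ?thesis unfolding computable2_def by blast
qed

lemma comp_on_id: "comp_on D (\<lambda>x. x)"
  unfolding comp_on_def by (auto intro!: exI[of _ "Id 0"] rec_eval_Id_nth)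

lemma comp_on_const: "comp_on D (\<lambda>x. c)"
  unfolding comp_on_def using rec_eval_const by blast

lemma comp_on_Suc_UNIV: "comp_on UNIV Suc"
  unfolding comp_on_def by (auto intro!: exI[of _ Sc] rec_eval_Sc_eq)

lemma comp_on_compose:
  assumes "comp_on E g" "comp_on D f" "\<And>x. x \<in> D \<Longrightarrow> f x \<in> E"
  shows "comp_on D (\<lambda>x. g (f x))"
proof -
  obtain pg pf where "\<And>x. x \<in> E \<Longrightarrow> rec_eval pg [x] (g x)" and "\<And>x. x \<in> D \<Longrightarrow> rec_eval pf [x] (f x)"
    using assms(1,2) comp_onE by metis
  then show ?thesis
    unfolding comp_on_def using assms(3) by (auto intro!: exI[of _ "Cn pg [pf]"] rec_eval_Cn1)
qed

lemma comp_on_compose_UNIV: "comp_on UNIV g \<Longrightarrow> comp_on D f \<Longrightarrow> comp_on D (\<lambda>x. g (f x))"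
  by (rule comp_on_compose) auto

lemma comp_on_compose2:
  assumes "computable2 g" "comp_on D f" "comp_on D h"
  shows "comp_on D (\<lambda>x. g (f x) (h x))"
proof -
  obtain pg pf ph where "\<And>x y z. z = g x y \<Longrightarrow> rec_eval pg [x, y] z"
    and "\<And>x. x \<in> D \<Longrightarrow> rec_eval pf [x] (f x)" and "\<And>x. x \<in> D \<Longrightarrow> rec_eval ph [x] (h x)"
    using assms computable2E comp_onE by metis
  then show ?thesis unfolding comp_on_def by (auto intro!: exI[of _ "Cn pg [pf, ph]"] rec_eval_Cn2)
qed

lemma comp_on_add [intro]: "comp_on D f \<Longrightarrow> comp_on D g \<Longrightarrow> comp_on D (\<lambda>x. f x + g x)"
  using comp_on_compose2[OF computable2_add] .

lemma comp_on_mult [intro]: "comp_on D f \<Longrightarrow> comp_on D g \<Longrightarrow> comp_on D (\<lambda>x. f x * g x)"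
  using comp_on_compose2[OF computable2_mult] .

lemma comp_on_diff [intro]: "comp_on D f \<Longrightarrow> comp_on D g \<Longrightarrow> comp_on D (\<lambda>x. f x - g x)"
  using comp_on_compose2[OF computable2_diff] .

lemma comp_on_power [intro]: "comp_on D f \<Longrightarrow> comp_on D g \<Longrightarrow> comp_on D (\<lambda>x. f x ^ g x)"
  using comp_on_compose2[OF computable2_power] .

lemma comp_on_prod_encode [intro]:
  "comp_on D f \<Longrightarrow> comp_on D g \<Longrightarrow> comp_on D (\<lambda>x. prod_encode (f x, g x))"
  using comp_on_compose2[OF computable2_prod_encode] .

lemma comp_on_Suc [intro]: "comp_on D f \<Longrightarrow> comp_on D (\<lambda>x. Suc (f x))"
  using comp_on_compose_UNIV[OF comp_on_Suc_UNIV] .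

lemma comp_on_triangle [intro]: "comp_on D f \<Longrightarrow> comp_on D (\<lambda>x. triangle (f x))"
  using comp_on_compose_UNIV[OF comp_on_triangle_UNIV] .

lemma comp_on_if_zero [intro]:
  assumes "comp_on D c" "comp_on D u" "comp_on D v"
  shows "comp_on D (\<lambda>x. if c x = 0 then u x else v x)"
proof -
  have "comp_on D (\<lambda>x. (1 - c x) * u x + (1 - (1 - c x)) * v x)"
    using assms by (intro comp_on_add comp_on_mult comp_on_diff comp_on_const)
  moreover have "(\<lambda>x. (1 - c x) * u x + (1 - (1 - c x)) * v x) = (\<lambda>x. if c x = 0 then u x else v x)"
    by auto
  ultimately show ?thesis by simp
qed

lemma comp_on_if_le [intro]:
  "comp_on D f \<Longrightarrow> comp_on D g \<Longrightarrow> comp_on D u \<Longrightarrow> comp_on D v \<Longrightarrow>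
    comp_on D (\<lambda>x. if f x \<le> g x then u x else v x)"
  using comp_on_if_zero[of D "\<lambda>x. f x - g x" u v] comp_on_diff by simp

lemma comp_on_if_eq [intro]:
  assumes "comp_on D f" "comp_on D g" "comp_on D u" "comp_on D v"
  shows "comp_on D (\<lambda>x. if f x = g x then u x else v x)"
proof -
  have "comp_on D (\<lambda>x. if (f x - g x) + (g x - f x) = 0 then u x else v x)"
    using assms by (intro comp_on_if_zero comp_on_add comp_on_diff)
  moreover have "((f x - g x) + (g x - f x) = 0) = (f x = g x)" for x by auto
  ultimately show ?thesis by simp
qed

lemma comp_on_Least_computable2:
  assumes "computable2 g" "\<And>x. x \<in> D \<Longrightarrow> \<exists>q. g q x = 0"
  shows "comp_on D (\<lambda>x. LEAST q. g q x = 0)"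
proof -
  obtain p where p: "\<And>x y z. z = g x y \<Longrightarrow> rec_eval p [x, y] z" using assms(1) computable2E by blast
  have "rec_eval (Mn p) [x] (LEAST q. g q x = 0)" if "x \<in> D" for x
  proof (rule rec_eval.mn)
    show "rec_eval p [LEAST q. g q x = 0, x] 0"
      using assms(2)[OF that] by (intro p) (metis (mono_tags) LeastI)
    show "\<forall>m < (LEAST q. g q x = 0). \<exists>y>0. rec_eval p [m, x] y"
      using not_less_Least p by blast
  qed
  then show ?thesis unfolding comp_on_def by blast
qed

lemma prod_decode_eq_Least:
  fixes z :: nat
  defines "s \<equiv> LEAST s. z < triangle (Suc s)"
  shows "prod_decode z = (z - triangle s, s - (z - triangle s))"
proof -
  have "z < triangle (Suc z)" by (induction z) auto
  then have upper: "z < triangle (Suc s)" unfolding s_def by (rule LeastI)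
  have lower: "triangle s \<le> z"
  proof (cases s)
    case (Suc s')
    then have "\<not> z < triangle (Suc s')" unfolding s_def by (metis lessI not_less_Least)
    then show ?thesis using Suc by simp
  qed simp
  then have "prod_encode (z - triangle s, s - (z - triangle s)) = z"
    using upper by (simp add: prod_encode_def)
  then show ?thesis by (metis prod_encode_inverse)
qed

abbreviation pfst :: "nat \<Rightarrow> nat" where "pfst z \<equiv> fst (prod_decode z)"
abbreviation psnd :: "nat \<Rightarrow> nat" where "psnd z \<equiv> snd (prod_decode z)"

lemma comp_on_prod_decode_UNIV: "comp_on UNIV pfst" "comp_on UNIV psnd"
proof -
  have "computable2 (\<lambda>s z. 1 - (triangle (Suc s) - z))"
    by (intro computable2_compose[OF computable2_diff] computable2_compose1[OF comp_on_triangle_UNIV]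
        computable2_compose1[OF comp_on_Suc_UNIV] computable2_const computable2_fst computable2_snd)
  moreover have "\<exists>s. 1 - (triangle (Suc s) - z) = 0" for z
    by (rule exI[of _ z]) (induction z, auto)
  ultimately have "comp_on UNIV (\<lambda>z. LEAST s. 1 - (triangle (Suc s) - z) = 0)"
    by (rule comp_on_Least_computable2)
  moreover have "(1 - (triangle (Suc s) - z) = 0) = (z < triangle (Suc s))" for s z :: nat
    by linarith
  ultimately have s: "comp_on UNIV (\<lambda>z. LEAST s. z < triangle (Suc s))" by simp
  show "comp_on UNIV pfst"
    unfolding prod_decode_eq_Least fst_conv using s by (intro comp_on_diff comp_on_triangle comp_on_id)
  show "comp_on UNIV psnd"
    unfolding prod_decode_eq_Least snd_conv using s by (intro comp_on_diff comp_on_triangle comp_on_id)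
qed

lemma comp_on_pfst [intro]: "comp_on D f \<Longrightarrow> comp_on D (\<lambda>x. pfst (f x))"
  using comp_on_compose_UNIV[OF comp_on_prod_decode_UNIV(1)] .

lemma comp_on_psnd [intro]: "comp_on D f \<Longrightarrow> comp_on D (\<lambda>x. psnd (f x))"
  using comp_on_compose_UNIV[OF comp_on_prod_decode_UNIV(2)] .

lemma computable2_iff_comp_on_UNIV: "computable2 g \<longleftrightarrow> comp_on UNIV (\<lambda>z. g (pfst z) (psnd z))"
proof
  assume "computable2 g"
  then show "comp_on UNIV (\<lambda>z. g (pfst z) (psnd z))"
    by (rule comp_on_compose2) (use comp_on_prod_decode_UNIV in auto)
next
  assume "comp_on UNIV (\<lambda>z. g (pfst z) (psnd z))"
  then have "computable2 (\<lambda>x y. g (pfst (prod_encode (x, y))) (psnd (prod_encode (x, y))))"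
    by (rule computable2_compose1[OF _ computable2_prod_encode])
  then show "computable2 g" by simp
qed

lemma comp_on_sum:
  assumes "comp_on D N" and "comp_on E (\<lambda>z. F (pfst z) (psnd z))"
    and "\<And>x i. x \<in> D \<Longrightarrow> i < N x \<Longrightarrow> prod_encode (i, x) \<in> E"
  shows "comp_on D (\<lambda>x. \<Sum>i<N x. F i x)"
proof -
  obtain pN where pN: "\<And>x. x \<in> D \<Longrightarrow> rec_eval pN [x] (N x)"
    using assms(1) comp_onE by blast
  obtain pF where pF: "\<And>z. z \<in> E \<Longrightarrow> rec_eval pF [z] (F (pfst z) (psnd z))"
    using assms(2) comp_onE by blast
  obtain pa where pa: "\<And>x y z. z = x + y \<Longrightarrow> rec_eval pa [x, y] z"
    using computable2_add computable2E by blast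
  obtain pe where pe: "\<And>x y z. z = prod_encode (x, y) \<Longrightarrow> rec_eval pe [x, y] z"
    using computable2_prod_encode computable2E by blast
  define G where "G = Pr Zr (Cn pa [Id 1, Cn pF [Cn pe [Id 0, Id 2]]])"
  have "rec_eval G [N x, x] (\<Sum>i<N x. F i x)" if "x \<in> D" for x
    unfolding G_def
  proof (rule rec_eval_Pr_iterate[where h="\<lambda>n. \<Sum>i<n. F i x"])
    fix k assume "k < N x"
    then have "rec_eval pF [prod_encode (k, x)] (F k x)" using pF assms(3)[OF that] by fastforce
    then show "rec_eval (Cn pa [Id 1, Cn pF [Cn pe [Id 0, Id 2]]]) [k, \<Sum>i<k. F i x, x] (\<Sum>i<Suc k. F i x)"
      by (auto intro!: rec_eval_Cn1 rec_eval_Cn2 rec_eval_Id_nth pa pe)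
  qed (simp add: rec_eval.zero)
  then show ?thesis
    unfolding comp_on_def using pN
    by (auto intro!: exI[of _ "Cn G [pN, Id 0]"] rec_eval_Cn2 rec_eval_Id_nth)
qed

lemma comp_on_sum_UNIV [intro]:
  "comp_on D N \<Longrightarrow> comp_on UNIV (\<lambda>z. F (pfst z) (psnd z)) \<Longrightarrow> comp_on D (\<lambda>x. \<Sum>i<N x. F i x)"
  by (rule comp_on_sum) auto

lemma div_eq_Least:
  "(m::nat) div d = (LEAST q. (if d = 0 then 0 else if Suc m \<le> d * Suc q then 0 else 1) = (0::nat))"
proof (cases "d = 0")
  case False
  show ?thesis
  proof (rule Least_equality[symmetric])
    have "m < d * Suc (m div d)"
      using False mult_div_mod_eq[of d m] mod_less_divisor[of d m]
      unfolding mult_Suc_right by linarith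
    then show "(if d = 0 then 0 else if Suc m \<le> d * Suc (m div d) then 0 else 1) = (0::nat)" by simp
  next
    fix q assume "(if d = 0 then 0 else if Suc m \<le> d * Suc q then 0 else 1) = (0::nat)"
    then have "m < d * Suc q" using False by (auto split: if_splits)
    then have "m < Suc q * d" by (simp add: mult.commute)
    then have "m div d < Suc q" by (rule less_mult_imp_div_less)
    then show "m div d \<le> q" by simp
  qed
qed simp

lemma comp_on_div [intro]:
  assumes "comp_on D f" "comp_on D g" shows "comp_on D (\<lambda>x. f x div g x)"
proof -
  have "computable2 (\<lambda>q z. if psnd z = 0 then 0 else if Suc (pfst z) \<le> psnd z * Suc q then 0 else 1)"
    unfolding computable2_iff_comp_on_UNIV
    by (intro comp_on_if_zero comp_on_if_le comp_on_pfst comp_on_psnd comp_on_mult comp_on_Suc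
        comp_on_const comp_on_id)
  moreover have
    "\<exists>q. (if psnd z = 0 then 0 else if Suc (pfst z) \<le> psnd z * Suc q then 0 else 1) = (0::nat)" for z
    by (rule exI[of _ "pfst z"]) (cases "psnd z"; simp)
  ultimately have "comp_on UNIV (\<lambda>z. pfst z div psnd z)"
    unfolding div_eq_Least by (rule comp_on_Least_computable2)
  from comp_on_compose_UNIV[OF this comp_on_prod_encode[OF assms]] show ?thesis by simp
qed

lemma comp_on_mod [intro]: "comp_on D f \<Longrightarrow> comp_on D g \<Longrightarrow> comp_on D (\<lambda>x. f x mod g x)"
  unfolding minus_mult_div_eq_mod[symmetric] by (intro comp_on_diff comp_on_mult comp_on_div)

lemma comp_on_compose3:
  assumes "comp_on UNIV (\<lambda>z. F (pfst z) (pfst (psnd z)) (psnd (psnd z)))"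
    and "comp_on D f" "comp_on D g" "comp_on D h"
  shows "comp_on D (\<lambda>x. F (f x) (g x) (h x))"
  using comp_on_compose_UNIV[OF assms(1)
      comp_on_prod_encode[OF assms(2) comp_on_prod_encode[OF assms(3,4)]]]
  by simp

section \<open>Enumerations of the alphabet with unbounded blocks\<close>

definition diagonal :: "lang \<Rightarrow> nat set \<Rightarrow> bool" where
  "diagonal L A \<longleftrightarrow> (\<forall>m. \<exists>w\<in>L. \<forall>a\<in>A. m \<le> count_list w a)"

lemma diag_answer_prod_encode:
  "finite A \<Longrightarrow> diag_answer lang (prod_encode (r, set_encode A)) \<longleftrightarrow> diagonal (lang r) A"
  unfolding diag_answer_def diagonal_def by simp

definition has_blocks :: "lang \<Rightarrow> nat list \<Rightarrow> nat \<Rightarrow> bool" where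
  "has_blocks L bs m \<longleftrightarrow> (\<exists>w\<in>L. \<exists>ws rest. length ws = length bs \<and> w = concat ws @ rest \<and>
      (\<forall>j<length bs. m \<le> count_list (ws ! j) (bs ! j)))"

lemma has_blocks_mono: "has_blocks L bs m \<Longrightarrow> m' \<le> m \<Longrightarrow> has_blocks L bs m'"
  unfolding has_blocks_def by (meson order_trans)

lemma split_at_first_threshold:
  assumes "b \<in> A" "m \<le> count_list w b"
  obtains u v b' where "w = u @ v" "b' \<in> A" "m \<le> count_list u b'" "\<forall>c\<in>A. count_list u c \<le> m"
proof -
  define P where "P t \<longleftrightarrow> (\<exists>b\<in>A. m \<le> count_list (take t w) b)" for t
  have "P (length w)" unfolding P_def using assms by auto
  define t where "t = (LEAST t. P t)"
  have Pt: "P t" unfolding t_def by (rule LeastI) fact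
  have "t \<le> length w" unfolding t_def by (rule Least_le) fact
  have "count_list (take t w) c \<le> m" if "c \<in> A" for c
  proof (cases t)
    case (Suc t')
    then have "\<not> P t'" unfolding t_def by (metis lessI not_less_Least)
    then have "count_list (take t' w) c < m" using that unfolding P_def by auto
    moreover have "take t w = take t' w @ [w ! t']"
      using Suc \<open>t \<le> length w\<close> by (simp add: take_Suc_conv_app_nth)
    ultimately show ?thesis by auto
  qed simp
  then show thesis using Pt that[of "take t w" "drop t w"] unfolding P_def by auto
qed

text \<open>Cut \<open>w\<close> after the shortest prefix in which some letter \<open>b\<close> reaches \<open>m\<close> occurrences;
  every other letter loses at most \<open>m\<close> occurrences there.\<close>

lemma greedy_blocks:
  assumes "finite A" "card A = k" "\<forall>b\<in>A. k * m \<le> count_list w b"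
  shows "\<exists>bs ws rest. distinct bs \<and> set bs = A \<and> length ws = length bs \<and> w = concat ws @ rest \<and>
     (\<forall>j<length bs. m \<le> count_list (ws ! j) (bs ! j))"
  using assms
proof (induction k arbitrary: A w)
  case 0
  then show ?case by (auto intro!: exI[of _ "[]"])
next
  case (Suc k)
  obtain b0 where "b0 \<in> A" using Suc.prems by fastforce
  then have "Suc k * m \<le> count_list w b0" using Suc.prems(3) by blast
  then have "m \<le> count_list w b0" by simp
  then obtain u v b where uv: "w = u @ v" "b \<in> A" "m \<le> count_list u b" "\<forall>c\<in>A. count_list u c \<le> m"
    by (rule split_at_first_threshold[OF \<open>b0 \<in> A\<close>])
  have "\<forall>c\<in>A - {b}. k * m \<le> count_list v c"
  proof
    fix c assume c: "c \<in> A - {b}"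
    have "Suc k * m \<le> count_list u c + count_list v c" using Suc.prems(3) c uv(1) by auto
    then show "k * m \<le> count_list v c" using uv(4) c by auto
  qed
  then obtain bs ws rest where IH: "distinct bs" "set bs = A - {b}" "length ws = length bs"
    "v = concat ws @ rest" "\<forall>j<length bs. m \<le> count_list (ws ! j) (bs ! j)"
    using Suc.IH[of "A - {b}" v] Suc.prems(1,2) uv(2) by auto
  have "\<forall>j<length (b # bs). m \<le> count_list ((u # ws) ! j) ((b # bs) ! j)"
    using IH(5) uv(3) by (auto simp: nth_Cons split: nat.split)
  then show ?case
    using IH(1-4) uv(1,2) by (intro exI[of _ "b # bs"] exI[of _ "u # ws"] exI[of _ rest]) auto
qed

lemma diagonal_imp_has_blocks:
  assumes "finite A" "diagonal L A"
  shows "\<exists>bs. distinct bs \<and> set bs = A \<and> (\<forall>m. has_blocks L bs m)"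
proof (rule ccontr)
  assume neg: "\<not> ?thesis"
  define P where "P = {bs. distinct bs \<and> set bs = A}"
  have "P \<subseteq> {xs. set xs \<subseteq> A \<and> length xs \<le> card A}"
    unfolding P_def using distinct_card by fastforce
  then have "finite P" using finite_lists_length_le[OF assms(1)] by (rule finite_subset)
  define bound where "bound bs = (LEAST m. \<not> has_blocks L bs m)" for bs
  have not_blocks: "\<not> has_blocks L bs (bound bs)" if "bs \<in> P" for bs
    using neg that unfolding P_def bound_def by (metis (mono_tags, lifting) LeastI mem_Collect_eq)
  define M where "M = Max (bound ` P)"
  obtain w where w: "w \<in> L" "\<forall>c\<in>A. card A * M \<le> count_list w c"
    using assms(2) unfolding diagonal_def by blast
  obtain bs ws rest where g: "distinct bs" "set bs = A" "length ws = length bs" "w = concat ws @ rest"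
     "\<forall>j<length bs. M \<le> count_list (ws ! j) (bs ! j)"
    using greedy_blocks[OF assms(1) refl w(2)] by blast
  have "has_blocks L bs M" unfolding has_blocks_def using w(1) g by blast
  moreover have "bs \<in> P" using g unfolding P_def by simp
  moreover have "bound bs \<le> M" unfolding M_def using \<open>finite P\<close> \<open>bs \<in> P\<close> by simp
  ultimately show False using not_blocks has_blocks_mono by blast
qed

section \<open>The marking automaton\<close>

lemma count_list_shuffles: "zs \<in> shuffles xs ys \<Longrightarrow> count_list zs c = count_list xs c + count_list ys c"
  by (induction xs ys arbitrary: zs rule: shuffles.induct) auto

lemma count_list_filter: "P c \<Longrightarrow> count_list (filter P xs) c = count_list xs c"
  by (induction xs) auto

lemma count_list_le_concat: "xs \<in> set xss \<Longrightarrow> count_list xs c \<le> count_list (concat xss) c"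
  by (induction xss) auto

lemma in_shuffles_filter: "zs \<in> shuffles (filter P zs) (filter (\<lambda>x. \<not> P x) zs)"
  by (induction zs) (auto intro: Cons_in_shuffles_leftI Cons_in_shuffles_rightI)

lemma reach_append: "reach T S (u @ v) = reach T (reach T S u) v"
  by (induction u arbitrary: S) auto

lemma Nil_in_bounded_lang: "[] \<in> bounded_lang bs"
  by (induction bs) (auto intro!: exI[of _ 0])

lemma sorted_in_bounded_lang_upt:
  "sorted u \<Longrightarrow> set u \<subseteq> {a..<a+n} \<Longrightarrow> u \<in> bounded_lang [a..<a+n]"
proof (induction n arbitrary: a u)
  case (Suc n)
  have eq: "[a..<a + Suc n] = a # [Suc a..<Suc a + n]" by (simp add: upt_conv_Cons)
  show ?case using Suc.prems unfolding eq
  proof (induction u)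
    case (Cons x u)
    show ?case
    proof (cases "x = a")
      case True
      then obtain k w where "u = replicate k a @ w" "w \<in> bounded_lang [Suc a..<Suc a + n]"
        using Cons by auto
      then show ?thesis using True by (auto intro!: exI[of _ "Suc k"])
    next
      case False
      then have "set (x # u) \<subseteq> {Suc a..<Suc a + n}" using Cons.prems by fastforce
      then have "x # u \<in> bounded_lang [Suc a..<Suc a + n]" using Suc.IH Cons.prems by blast
      then show ?thesis by (auto intro!: exI[of _ 0])
    qed
  qed (rule Nil_in_bounded_lang)
qed simp

text \<open>States \<open>0..n\<close> are phases; a letter \<open>bs ! j\<close> read in a phase \<open>i \<le> j\<close> may lead to the waiting
  state \<open>Suc n + j\<close>, which is left only by reading the marker \<open>a + j\<close>, entering phase \<open>j\<close>.\<close>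

definition marking_trans :: "nat set \<Rightarrow> nat \<Rightarrow> nat \<Rightarrow> nat list \<Rightarrow> (nat \<times> nat \<times> nat) set" where
  "marking_trans A a n bs = {(i, e, i) | i e. i \<le> n \<and> e \<in> A}
     \<union> {(i, bs ! j, Suc n + j) | i j. j < n \<and> i \<le> j} \<union> {(Suc n + j, a + j, j) | j. j < n}"

definition reach_le_lang :: "(nat \<times> nat \<times> nat) set \<Rightarrow> nat \<Rightarrow> lang" where
  "reach_le_lang T n = {w. reach T {0} w \<inter> {..n} \<noteq> {}}"

locale marking =
  fixes A :: "nat set" and a n :: nat and bs :: "nat list"
  assumes length_bs: "length bs = n"
    and letters_below: "\<And>e. e \<in> A \<Longrightarrow> e < a"
    and blocks_below: "\<And>j. j < n \<Longrightarrow> bs ! j < a"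
begin

abbreviation "T \<equiv> marking_trans A a n bs"
abbreviation "C \<equiv> {a..<a+n}"

lemma letter_not_marker: "e \<in> A \<Longrightarrow> e \<notin> C"
  using letters_below by fastforce

definition phase :: "nat \<Rightarrow> nat" where "phase q = (if q \<le> n then q else q - Suc n)"

definition run_inv :: "nat \<Rightarrow> nat list \<Rightarrow> bool" where
  "run_inv q p \<longleftrightarrow> sorted (filter (\<lambda>x. x \<in> C) p) \<and> (\<forall>x\<in>set p. x \<in> C \<longrightarrow> x \<le> a + phase q) \<and>
     (\<forall>i<n. count_list p (a + i) + (if q = Suc n + i then 1 else 0) \<le> count_list p (bs ! i))"

lemma run_inv_step:
  assumes inv: "run_inv q p" and tr: "(q, x, q') \<in> T"
  shows "run_inv q' (p @ [x])"
proof -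
  from tr consider (loop) "q' = q" "q \<le> n" "x \<in> A"
    | (wait) j where "x = bs ! j" "q' = Suc n + j" "j < n" "q \<le> j"
    | (mark) j where "q = Suc n + j" "x = a + j" "q' = j" "j < n"
    unfolding marking_trans_def by blast
  then show ?thesis
  proof cases
    case loop
    have "x \<noteq> a + i" if "i < n" for i using loop letters_below that by fastforce
    then show ?thesis using inv loop letter_not_marker unfolding run_inv_def by (auto simp: phase_def)
  next
    case (wait j)
    have xC: "x \<notin> C" using wait blocks_below[of j] by auto
    have cnt: "count_list p (a + i) + (if q' = Suc n + i then 1 else 0) \<le> count_list (p @ [x]) (bs ! i)"
      if "i < n" for i
    proof -
      have "count_list p (a + i) \<le> count_list p (bs ! i)"
        using inv that wait unfolding run_inv_def by (auto split: if_splits)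
      then show ?thesis using wait by (cases "i = j") auto
    qed
    have "\<forall>y\<in>set p. y \<in> C \<longrightarrow> y \<le> a + phase q'"
      using inv wait unfolding run_inv_def by (auto simp: phase_def)
    then show ?thesis using inv wait xC cnt unfolding run_inv_def by auto
  next
    case (mark j)
    have ne: "bs ! i \<noteq> a + j" if "i < n" for i using blocks_below[OF that] by simp
    have le: "\<forall>y\<in>set p. y \<in> C \<longrightarrow> y \<le> a + j"
      using inv mark unfolding run_inv_def by (simp add: phase_def)
    have cnt: "count_list (p @ [x]) (a + i) + (if q' = Suc n + i then 1 else 0)
      \<le> count_list (p @ [x]) (bs ! i)"
      if "i < n" for i
    proof -
      have "count_list p (a + i) + (if q = Suc n + i then 1 else 0) \<le> count_list p (bs ! i)"
        using inv that unfolding run_inv_def by blast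
      then show ?thesis using mark ne[OF that] by (cases "i = j") auto
    qed
    show ?thesis
      using inv le cnt mark unfolding run_inv_def by (auto simp: phase_def sorted_append)
  qed
qed

lemma run_inv_reach: "q \<in> reach T {0} p \<Longrightarrow> run_inv q p"
proof (induction p arbitrary: q rule: rev_induct)
  case Nil
  then show ?case by (simp add: run_inv_def phase_def)
next
  case (snoc x p)
  then obtain q0 where "q0 \<in> reach T {0} p" "(q0, x, q) \<in> T" by (auto simp: reach_append)
  then show ?case using snoc.IH run_inv_step by blast
qed

lemma reach_le_lang_sorted_markers: "w \<in> reach_le_lang T n \<Longrightarrow> sorted (filter (\<lambda>x. x \<in> C) w)"
  unfolding reach_le_lang_def using run_inv_reach run_inv_def by blast

lemma reach_le_lang_count_markers:
  assumes "w \<in> reach_le_lang T n" "i < n"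
  shows "count_list w (a + i) \<le> count_list w (bs ! i)"
proof -
  obtain q where "q \<in> reach T {0} w" "q \<le> n" using assms(1) unfolding reach_le_lang_def by auto
  then show ?thesis using run_inv_reach[of q w] assms(2) unfolding run_inv_def by fastforce
qed

definition mark :: "nat \<Rightarrow> nat list \<Rightarrow> nat list" where
  "mark j v = concat (map (\<lambda>x. if x = bs ! j then [x, a + j] else [x]) v)"

lemma mark_Nil [simp]: "mark j [] = []"
  by (simp add: mark_def)

lemma mark_Cons: "mark j (x # v) = (if x = bs ! j then [x, a + j] else [x]) @ mark j v"
  by (simp add: mark_def)

lemma filter_mark: "j < n \<Longrightarrow> set v \<subseteq> A \<Longrightarrow> filter (\<lambda>x. x \<notin> C) (mark j v) = v"
  using letter_not_marker by (induction v) (auto simp: mark_Cons)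

lemma count_mark: "set v \<subseteq> A \<Longrightarrow> count_list (mark j v) (a + j) = count_list v (bs ! j)"
  by (induction v) (auto simp: mark_Cons dest: letters_below)

lemma reach_mark:
  "j < n \<Longrightarrow> set v \<subseteq> A \<Longrightarrow> \<exists>q\<in>S. q \<le> j \<Longrightarrow> \<exists>q\<in>reach T S (mark j v). q \<le> j"
proof (induction v arbitrary: S)
  case (Cons x v)
  obtain q where q: "q \<in> S" "q \<le> j" using Cons.prems by blast
  have "\<exists>q'\<in>reach T S (if x = bs ! j then [x, a + j] else [x]). q' \<le> j"
  proof (cases "x = bs ! j")
    case True
    have "(q, x, Suc n + j) \<in> T" "(Suc n + j, a + j, j) \<in> T"
      using True q Cons.prems(1) unfolding marking_trans_def by blast+
    then show ?thesis using True q by auto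
  next
    case False
    have "(q, x, q) \<in> T" using q Cons.prems unfolding marking_trans_def by auto
    then show ?thesis using False q by auto
  qed
  then show ?case using Cons.IH Cons.prems by (auto simp: mark_Cons reach_append)
qed simp

lemma reach_phase_letters: "set v \<subseteq> A \<Longrightarrow> q \<in> S \<Longrightarrow> q \<le> n \<Longrightarrow> q \<in> reach T S v"
proof (induction v arbitrary: S)
  case (Cons x v)
  then have "q \<in> reach T S [x]" unfolding marking_trans_def by auto
  then show ?case using Cons by (simp add: reach_append)
qed simp

lemma marked_blocks_in_reach_le_lang:
  assumes "\<forall>j<n. set (ws ! j) \<subseteq> A" "set rest \<subseteq> A"
  shows "concat (map (\<lambda>j. mark j (ws ! j)) [0..<n]) @ rest \<in> reach_le_lang T n"
proof -
  have "\<exists>q\<in>reach T {0} (concat (map (\<lambda>j. mark j (ws ! j)) [0..<k])). q \<le> k" if "k \<le> n" for k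
    using that
  proof (induction k)
    case (Suc k)
    then have "\<exists>q\<in>reach T {0} (concat (map (\<lambda>j. mark j (ws ! j)) [0..<k])). q \<le> k" by simp
    then have "\<exists>q\<in>reach T (reach T {0} (concat (map (\<lambda>j. mark j (ws ! j)) [0..<k])))
        (mark k (ws ! k)). q \<le> k"
      using Suc.prems assms(1) by (intro reach_mark) auto
    then show ?case unfolding upt_Suc_append[OF le0] map_append concat_append reach_append
      by (auto intro: le_SucI)
  qed simp
  then obtain q where "q \<in> reach T {0} (concat (map (\<lambda>j. mark j (ws ! j)) [0..<n]))" "q \<le> n"
    by blast
  then show ?thesis
    using reach_phase_letters[OF assms(2)] unfolding reach_le_lang_def by (auto simp: reach_append)
qed

definition marked_lang :: "lang \<Rightarrow> lang" where
  "marked_lang L = proj_lang C (upclose_lang C L \<inter> reach_le_lang T n)"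

lemma marked_lang_bounded: "marked_lang L \<subseteq> lists C \<inter> bounded_lang [a..<a+n]"
proof
  fix u assume "u \<in> marked_lang L"
  then obtain w where w: "w \<in> reach_le_lang T n" "u = filter (\<lambda>x. x \<in> C) w"
    unfolding marked_lang_def proj_lang_def by blast
  then have "set u \<subseteq> C" by auto
  then show "u \<in> lists C \<inter> bounded_lang [a..<a+n]"
    using reach_le_lang_sorted_markers[OF w(1)] sorted_in_bounded_lang_upt w(2) by auto
qed

lemma marked_lang_counts:
  assumes "u \<in> marked_lang L"
  shows "\<exists>w\<in>L. \<forall>i<n. count_list u (a + i) \<le> count_list w (bs ! i)"
proof -
  obtain w' where w': "w' \<in> upclose_lang C L" "w' \<in> reach_le_lang T n" "u = filter (\<lambda>x. x \<in> C) w'"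
    using assms unfolding marked_lang_def proj_lang_def by blast
  obtain w v where wv: "w \<in> L" "set v \<subseteq> C" "w' \<in> shuffles w v"
    using w'(1) unfolding upclose_lang_def by blast
  have "count_list u (a + i) \<le> count_list w (bs ! i)" if i: "i < n" for i
  proof -
    have "count_list u (a + i) = count_list w' (a + i)"
      unfolding w'(3) using i by (simp add: count_list_filter)
    also have "\<dots> \<le> count_list w' (bs ! i)" using reach_le_lang_count_markers[OF w'(2) i] .
    also have "\<dots> = count_list w (bs ! i) + count_list v (bs ! i)" using count_list_shuffles[OF wv(3)] .
    also have "count_list v (bs ! i) = 0"
      using wv(2) blocks_below[OF i] by (meson atLeastLessThan_iff count_notin not_le subsetD)
    finally show ?thesis by simp
  qed
  then show ?thesis using wv(1) by blast
qed

lemma diagonal_of_marked_lang: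
  assumes "A \<subseteq> set bs" "diagonal (marked_lang L) C"
  shows "diagonal L A"
  unfolding diagonal_def
proof
  fix m
  obtain u where u: "u \<in> marked_lang L" "\<forall>c\<in>C. m \<le> count_list u c"
    using assms(2) unfolding diagonal_def by blast
  obtain w where w: "w \<in> L" "\<forall>i<n. count_list u (a + i) \<le> count_list w (bs ! i)"
    using marked_lang_counts[OF u(1)] by blast
  have "m \<le> count_list w e" if e: "e \<in> A" for e
  proof -
    obtain i where i: "i < n" "e = bs ! i"
      using assms(1) e length_bs by (force simp: in_set_conv_nth)
    then have "m \<le> count_list u (a + i)" using u(2) by simp
    then show ?thesis using w(2) i by (auto intro: le_trans)
  qed
  then show "\<exists>w\<in>L. \<forall>e\<in>A. m \<le> count_list w e" using w(1) by blast
qed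

lemma filter_marked_blocks:
  assumes "length ws = n" "\<forall>j<n. set (ws ! j) \<subseteq> A"
  shows "filter (\<lambda>x. x \<notin> C) (concat (map (\<lambda>j. mark j (ws ! j)) [0..<n])) = concat ws"
proof -
  have "filter (\<lambda>x. x \<notin> C) (concat (map (\<lambda>j. mark j (ws ! j)) [0..<n]))
      = concat (map (\<lambda>j. ws ! j) [0..<n])"
    unfolding filter_concat map_map o_def using assms(2)
    by (intro arg_cong[where f=concat] map_cong refl filter_mark) auto
  also have "\<dots> = concat ws" unfolding assms(1)[symmetric] map_nth ..
  finally show ?thesis .
qed

lemma count_marked_blocks:
  assumes "j < n" "set (ws ! j) \<subseteq> A"
  shows "count_list (ws ! j) (bs ! j) \<le> count_list (concat (map (\<lambda>j. mark j (ws ! j)) [0..<n])) (a + j)"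
proof -
  have "mark j (ws ! j) \<in> set (map (\<lambda>j. mark j (ws ! j)) [0..<n])" using assms(1) by simp
  then show ?thesis using count_list_le_concat count_mark[OF assms(2)] by metis
qed

lemma marked_lang_witness:
  assumes "L \<subseteq> lists A" "has_blocks L bs m"
  shows "\<exists>u\<in>marked_lang L. \<forall>c\<in>C. m \<le> count_list u c"
proof -
  obtain w ws rest where w: "w \<in> L" "length ws = n" "w = concat ws @ rest"
      "\<forall>j<n. m \<le> count_list (ws ! j) (bs ! j)"
    using assms(2) length_bs unfolding has_blocks_def by blast
  have "set w \<subseteq> A" using assms(1) w(1) by auto
  then have wsA: "\<forall>j<n. set (ws ! j) \<subseteq> A" and restA: "set rest \<subseteq> A"
    using w(2,3) by (auto dest!: nth_mem)
  define w' where "w' = concat (map (\<lambda>j. mark j (ws ! j)) [0..<n]) @ rest"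
  have "filter (\<lambda>x. x \<notin> C) w' = w"
    using filter_marked_blocks[OF w(2) wsA] restA letter_not_marker w(3)
    unfolding w'_def by (auto simp: filter_id_conv)
  then have "w' \<in> shuffles w (filter (\<lambda>x. x \<in> C) w')"
    using in_shuffles_filter[of w' "\<lambda>x. x \<notin> C"] shuffles_commutes by simp
  then have "w' \<in> upclose_lang C L"
    unfolding upclose_lang_def using w(1)
    by (intro CollectI bexI[of _ w] exI[of _ "filter (\<lambda>x. x \<in> C) w'"] conjI) auto
  then have u: "filter (\<lambda>x. x \<in> C) w' \<in> marked_lang L"
    using marked_blocks_in_reach_le_lang[OF wsA restA]
    unfolding w'_def marked_lang_def proj_lang_def by blast
  have "m \<le> count_list (filter (\<lambda>x. x \<in> C) w') (a + j)" if "j < n" for j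
    using count_marked_blocks[OF that, of ws] wsA w(4) that
    unfolding w'_def by (simp add: count_list_filter) (meson le_add1 le_trans)
  then have "\<forall>c\<in>C. m \<le> count_list (filter (\<lambda>x. x \<in> C) w') c"
    by (metis atLeastLessThan_iff le_add_diff_inverse nat_add_left_cancel_less)
  then show ?thesis using u by blast
qed

end

section \<open>Arithmetic codes\<close>

definition digit :: "nat \<Rightarrow> nat \<Rightarrow> nat \<Rightarrow> nat" where "digit b x j = x div b ^ j mod b"

lemma in_set_decode_iff_digit: "e \<in> set_decode x \<longleftrightarrow> digit 2 x e = 1"
  unfolding set_decode_def digit_def by (simp add: odd_iff_mod_2_eq_one)

lemma digit_2_cases: "digit 2 x e = 0 \<or> digit 2 x e = 1"
  unfolding digit_def by auto

lemma set_decode_less: "e \<in> set_decode x \<Longrightarrow> e < x"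
proof -
  assume "e \<in> set_decode x"
  then have "x div 2 ^ e \<noteq> 0" unfolding set_decode_def by (metis even_zero mem_Collect_eq)
  then have "2 ^ e \<le> x" by (simp add: div_eq_0_iff not_less)
  then show "e < x" using less_exp[of e] by linarith
qed

lemma sum_digit_2: "(\<Sum>e<x. digit 2 x e * g e) = (\<Sum>e\<in>set_decode x. g e)"
proof -
  have "(\<Sum>e<x. digit 2 x e * g e) = (\<Sum>e\<in>set_decode x. digit 2 x e * g e)"
    using set_decode_less in_set_decode_iff_digit digit_2_cases
    by (intro sum.mono_neutral_right) fastforce+
  also have "\<dots> = (\<Sum>e\<in>set_decode x. g e)" using in_set_decode_iff_digit by simp
  finally show ?thesis .
qed

definition card_code :: "nat \<Rightarrow> nat" where "card_code x = (\<Sum>e<x. digit 2 x e)"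

lemma card_code_eq: "card_code x = card (set_decode x)"
  using sum_digit_2[of x "\<lambda>_. 1"] unfolding card_code_def by simp

definition interval_code :: "nat \<Rightarrow> nat \<Rightarrow> nat" where "interval_code a n = (\<Sum>j<n. 2 ^ (a + j))"

lemma interval_code_eq: "interval_code a n = set_encode {a..<a+n}"
proof -
  have "{a..<a+n} = (\<lambda>j. a + j) ` {..<n}"
    by (simp add: image_add_atLeastLessThan lessThan_atLeast0 add.commute)
  then show ?thesis unfolding set_encode_def interval_code_def by (simp add: sum.reindex)
qed

fun from_digits :: "nat \<Rightarrow> nat list \<Rightarrow> nat" where
  "from_digits b [] = 0"
| "from_digits b (d # ds) = d + b * from_digits b ds"

lemma from_digits_less: "\<forall>d\<in>set ds. d < b \<Longrightarrow> from_digits b ds < b ^ length ds"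
proof (induction ds)
  case (Cons d ds)
  then have "b * (from_digits b ds + 1) \<le> b * b ^ length ds" by (simp del: mult_Suc_right)
  then show ?case using Cons.prems by (simp add: algebra_simps)
qed simp

lemma digit_from_digits: "\<forall>d\<in>set ds. d < b \<Longrightarrow> j < length ds \<Longrightarrow> digit b (from_digits b ds) j = ds ! j"
proof (induction ds arbitrary: j)
  case (Cons d ds)
  then have "d < b" by simp
  then have "digit b (from_digits b (d # ds)) (Suc j') = digit b (from_digits b ds) j'" for j'
    unfolding digit_def by (simp add: div_mult2_eq)
  then show ?case using Cons \<open>d < b\<close> by (cases j) (auto simp: digit_def)
qed simp

definition enumeration_defect :: "nat \<Rightarrow> nat \<Rightarrow> nat \<Rightarrow> nat" where
  "enumeration_defect a n y = (\<Sum>j<n. 1 - digit 2 a (digit a y j))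
     + (\<Sum>j<n. \<Sum>i<j. if digit a y i = digit a y j then 1 else 0)"

lemma enumeration_defect_eq_0_iff:
  "enumeration_defect a n y = 0 \<longleftrightarrow>
     (\<forall>j<n. digit a y j \<in> set_decode a) \<and> distinct (map (digit a y) [0..<n])"
proof -
  have "(1 - digit 2 a e = 0) = (e \<in> set_decode a)" for e
    using in_set_decode_iff_digit[of e a] digit_2_cases[of a e] by auto
  then have "(\<Sum>j<n. 1 - digit 2 a (digit a y j)) = 0 \<longleftrightarrow> (\<forall>j<n. digit a y j \<in> set_decode a)"
    by auto
  moreover have "(\<Sum>j<n. \<Sum>i<j. if digit a y i = digit a y j then 1 else (0::nat)) = 0 \<longleftrightarrow>
      (\<forall>j<n. \<forall>i<j. digit a y i \<noteq> digit a y j)"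
    by (simp add: sum_eq_0_iff Ball_def) (use nat_neq_iff in blast)
  moreover have "distinct (map (digit a y) [0..<n]) \<longleftrightarrow> (\<forall>j<n. \<forall>i<j. digit a y i \<noteq> digit a y j)"
    unfolding distinct_conv_nth by (simp add: nat_neq_iff) (meson order.strict_trans)
  ultimately show ?thesis unfolding enumeration_defect_def by simp
qed

lemma enumeration_defect_eq_0_imp:
  assumes "enumeration_defect a n y = 0" "n = card (set_decode a)"
  shows "set (map (digit a y) [0..<n]) = set_decode a"
proof -
  have "set (map (digit a y) [0..<n]) \<subseteq> set_decode a" "distinct (map (digit a y) [0..<n])"
    using assms(1) enumeration_defect_eq_0_iff by auto
  moreover have "card (set (map (digit a y) [0..<n])) = card (set_decode a)"
    using distinct_card[OF \<open>distinct _\<close>] assms(2) by simp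
  ultimately show ?thesis using card_subset_eq[OF finite_set_decode] by blast
qed

lemma enumeration_defect_from_digits:
  assumes "distinct bs" "set bs = set_decode a"
  defines "y \<equiv> from_digits a bs"
  shows "y < a ^ length bs" and "map (digit a y) [0..<length bs] = bs"
    and "enumeration_defect a (length bs) y = 0"
proof -
  have below: "\<forall>b\<in>set bs. b < a" using assms(2) set_decode_less by blast
  show "y < a ^ length bs" using from_digits_less[OF below] unfolding y_def .
  show digits: "map (digit a y) [0..<length bs] = bs"
    using digit_from_digits[OF below] unfolding y_def by (intro nth_equalityI) auto
  have "digit a y j \<in> set_decode a" if "j < length bs" for j
    using digit_from_digits[OF below that] assms(2) nth_mem[OF that] unfolding y_def by simp
  then show "enumeration_defect a (length bs) y = 0"
    unfolding enumeration_defect_eq_0_iff digits using assms(1) by simp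
qed

definition triple_encode :: "nat \<times> nat \<times> nat \<Rightarrow> nat" where
  "triple_encode = (\<lambda>(q, e, q'). prod_encode (q, prod_encode (e, q')))"

lemma trip_decode_triple_encode [simp]: "trip_decode (triple_encode t) = t"
  by (cases t) (simp add: triple_encode_def trip_decode_def)

definition marking_trans_code :: "nat \<Rightarrow> nat \<Rightarrow> nat \<Rightarrow> nat" where
  "marking_trans_code a n y = (\<Sum>i<Suc n. \<Sum>e<a. digit 2 a e * 2 ^ triple_encode (i, e, i))
     + (\<Sum>j<n. \<Sum>i<Suc j. 2 ^ triple_encode (i, digit a y j, Suc n + j))
     + (\<Sum>j<n. 2 ^ triple_encode (Suc n + j, a + j, j))"

lemma marking_trans_code_eq:
  "marking_trans_code a n y =
    set_encode (triple_encode ` marking_trans (set_decode a) a n (map (digit a y) [0..<n]))"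
proof -
  define P1 where "P1 = (\<lambda>(i, e). (i, e, i)) ` ({..<Suc n} \<times> set_decode a)"
  define P2 where "P2 = (\<lambda>(j, i). (i, digit a y j, Suc n + j)) ` (SIGMA j:{..<n}. {..<Suc j})"
  define P3 where "P3 = (\<lambda>j. (Suc n + j, a + j, j)) ` {..<n}"
  have "marking_trans (set_decode a) a n (map (digit a y) [0..<n]) = P1 \<union> P2 \<union> P3"
    unfolding marking_trans_def P1_def P2_def P3_def by (auto simp: less_Suc_eq_le image_iff)
  moreover have "finite P1" "finite P2" "finite P3" "P1 \<inter> P2 = {}" "(P1 \<union> P2) \<inter> P3 = {}"
    unfolding P1_def P2_def P3_def by auto
  moreover have "inj_on triple_encode X" for X
    by (rule inj_onI) (metis trip_decode_triple_encode)
  ultimately have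
    "set_encode (triple_encode ` marking_trans (set_decode a) a n (map (digit a y) [0..<n])) =
      (\<Sum>t\<in>P1. 2 ^ triple_encode t) + (\<Sum>t\<in>P2. 2 ^ triple_encode t) + (\<Sum>t\<in>P3. 2 ^ triple_encode t)"
    unfolding set_encode_def by (simp add: sum.reindex sum.union_disjoint)
  also have "(\<Sum>t\<in>P1. 2 ^ triple_encode t) =
      (\<Sum>(i, e)\<in>{..<Suc n} \<times> set_decode a. (2::nat) ^ triple_encode (i, e, i))"
    unfolding P1_def by (subst sum.reindex) (auto simp: inj_on_def case_prod_beta)
  also have "\<dots> = (\<Sum>i<Suc n. \<Sum>e<a. digit 2 a e * 2 ^ triple_encode (i, e, i))"
    unfolding sum_digit_2 by (rule sum.cartesian_product[symmetric])
  also have "(\<Sum>t\<in>P2. 2 ^ triple_encode t) =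
      (\<Sum>(j, i)\<in>(SIGMA j:{..<n}. {..<Suc j}). (2::nat) ^ triple_encode (i, digit a y j, Suc n + j))"
    unfolding P2_def by (subst sum.reindex) (auto simp: inj_on_def case_prod_beta)
  also have "\<dots> = (\<Sum>j<n. \<Sum>i<Suc j. 2 ^ triple_encode (i, digit a y j, Suc n + j))"
    by (rule sum.Sigma[symmetric]) auto
  also have "(\<Sum>t\<in>P3. 2 ^ triple_encode t) = (\<Sum>j<n. (2::nat) ^ triple_encode (Suc n + j, a + j, j))"
    unfolding P3_def by (subst sum.reindex) (auto simp: inj_on_def)
  finally show ?thesis unfolding marking_trans_code_def by simp
qed

definition marking_nfa_code :: "nat \<Rightarrow> nat \<Rightarrow> nat \<Rightarrow> nat" where
  "marking_nfa_code a n y = prod_encode (marking_trans_code a n y, prod_encode (1, 2 ^ Suc n - 1))"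

lemma set_encode_lessThan: "set_encode {..<k} = 2 ^ k - 1"
  by (induction k) (simp_all add: lessThan_Suc)

lemma finite_marking_trans:
  assumes "finite A" shows "finite (marking_trans A a n bs)"
proof (rule finite_subset)
  show "marking_trans A a n bs \<subseteq> {..2 * n} \<times> (A \<union> (!) bs ` {..<n} \<union> {a..<a + n}) \<times> {..2 * n}"
    unfolding marking_trans_def by auto
qed (use assms in auto)

lemma nfa_lang_marking_nfa_code:
  "nfa_lang (marking_nfa_code a n y) =
    reach_le_lang (marking_trans (set_decode a) a n (map (digit a y) [0..<n])) n"
proof -
  have "finite (marking_trans (set_decode a) a n (map (digit a y) [0..<n]))"
    by (simp add: finite_marking_trans)
  then have
    "nfa_trans (marking_nfa_code a n y) = marking_trans (set_decode a) a n (map (digit a y) [0..<n])"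
    unfolding nfa_trans_def marking_nfa_code_def marking_trans_code_eq by (simp add: image_image)
  moreover have "nfa_init (marking_nfa_code a n y) = {0}"
    using set_encode_inverse[of "{0}"] unfolding nfa_init_def marking_nfa_code_def by simp
  moreover have "nfa_final (marking_nfa_code a n y) = {..n}"
    using set_encode_inverse[of "{..<Suc n}", unfolded set_encode_lessThan]
    unfolding nfa_final_def marking_nfa_code_def by (simp add: lessThan_Suc_atMost)
  ultimately show ?thesis unfolding nfa_lang_def reach_le_lang_def by simp
qed

lemma comp_on_digit [intro]:
  "comp_on D f \<Longrightarrow> comp_on D g \<Longrightarrow> comp_on D h \<Longrightarrow> comp_on D (\<lambda>x. digit (f x) (g x) (h x))"
  unfolding digit_def by (intro comp_on_mod comp_on_div comp_on_power)

lemma comp_on_card_code [intro]: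
  assumes "comp_on D f" shows "comp_on D (\<lambda>x. card_code (f x))"
proof (rule comp_on_compose_UNIV[where g=card_code, OF _ assms])
  show "comp_on UNIV card_code"
    unfolding card_code_def
    by (intro comp_on_sum_UNIV comp_on_digit comp_on_const comp_on_pfst comp_on_psnd comp_on_id)
qed

lemma comp_on_interval_code [intro]:
  "comp_on D f \<Longrightarrow> comp_on D g \<Longrightarrow> comp_on D (\<lambda>x. interval_code (f x) (g x))"
  unfolding interval_code_def
  by (rule comp_on_compose2[OF computable2_iff_comp_on_UNIV[THEN iffD2]])
    (intro comp_on_sum_UNIV comp_on_power comp_on_add comp_on_const comp_on_pfst comp_on_psnd comp_on_id)

lemma comp_on_enumeration_defect [intro]:
  assumes "comp_on D f" "comp_on D g" "comp_on D h"
  shows "comp_on D (\<lambda>x. enumeration_defect (f x) (g x) (h x))"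
proof (rule comp_on_compose3[where F=enumeration_defect, OF _ assms])
  show "comp_on UNIV (\<lambda>z. enumeration_defect (pfst z) (pfst (psnd z)) (psnd (psnd z)))"
    unfolding enumeration_defect_def
    by (intro comp_on_add comp_on_sum_UNIV comp_on_diff comp_on_const comp_on_digit comp_on_if_eq
        comp_on_pfst comp_on_psnd comp_on_id)
qed

lemma comp_on_marking_nfa_code [intro]:
  assumes "comp_on D f" "comp_on D g" "comp_on D h"
  shows "comp_on D (\<lambda>x. marking_nfa_code (f x) (g x) (h x))"
proof (rule comp_on_compose3[where F=marking_nfa_code, OF _ assms])
  show "comp_on UNIV (\<lambda>z. marking_nfa_code (pfst z) (pfst (psnd z)) (psnd (psnd z)))"
    unfolding marking_nfa_code_def marking_trans_code_def triple_encode_def prod.case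
    by (intro comp_on_prod_encode comp_on_add comp_on_sum_UNIV comp_on_diff comp_on_mult comp_on_power
        comp_on_const comp_on_Suc comp_on_digit comp_on_pfst comp_on_psnd comp_on_id)
qed

section \<open>Reduction to the SUP\<close>

locale trio_operations =
  fixes R :: "nat set" and lang :: "nat \<Rightarrow> lang" and proj up inter :: "nat \<Rightarrow> nat"
  assumes comp_on_proj: "comp_on {prod_encode (r, c) | r c. r \<in> R} proj"
    and comp_on_up: "comp_on {prod_encode (r, c) | r c. r \<in> R} up"
    and comp_on_inter: "comp_on {prod_encode (r, c) | r c. r \<in> R} inter"
    and proj: "r \<in> R \<Longrightarrow> proj (prod_encode (r, c)) \<in> R \<and>
      lang (proj (prod_encode (r, c))) = proj_lang (set_decode c) (lang r)"
    and up: "r \<in> R \<Longrightarrow> up (prod_encode (r, c)) \<in> R \<and>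
      lang (up (prod_encode (r, c))) = upclose_lang (set_decode c) (lang r)"
    and inter: "r \<in> R \<Longrightarrow> inter (prod_encode (r, c)) \<in> R \<and>
      lang (inter (prod_encode (r, c))) = lang r \<inter> nfa_lang c"

lemma codes_of_finite_sets:
  "{prod_encode (r, set_encode B) | r B. r \<in> R \<and> finite B} = {prod_encode (r, c) | r c. r \<in> R}"
  by (auto intro!: exI[of _ "set_decode c" for c])

lemma full_trio_operations:
  assumes "full_trio R lang"
  obtains proj up inter where "trio_operations R lang proj up inter"
proof -
  from assms[unfolded full_trio_def codes_of_finite_sets] obtain proj up inter
    where "comp_on {prod_encode (r, c) | r c. r \<in> R} proj"
      and proj: "\<forall>r\<in>R. \<forall>B. finite B \<longrightarrow> proj (prod_encode (r, set_encode B)) \<in> R \<and>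
        lang (proj (prod_encode (r, set_encode B))) = proj_lang B (lang r)"
      and "comp_on {prod_encode (r, c) | r c. r \<in> R} up"
      and up: "\<forall>r\<in>R. \<forall>B. finite B \<longrightarrow> up (prod_encode (r, set_encode B)) \<in> R \<and>
        lang (up (prod_encode (r, set_encode B))) = upclose_lang B (lang r)"
      and "comp_on {prod_encode (r, c) | r c. r \<in> R} inter"
      and "\<forall>r\<in>R. \<forall>c. inter (prod_encode (r, c)) \<in> R \<and>
        lang (inter (prod_encode (r, c))) = lang r \<inter> nfa_lang c"
    by (elim conjE exE)
  moreover have "proj (prod_encode (r, c)) \<in> R \<and>
      lang (proj (prod_encode (r, c))) = proj_lang (set_decode c) (lang r)"
    and "up (prod_encode (r, c)) \<in> R \<and>
      lang (up (prod_encode (r, c))) = upclose_lang (set_decode c) (lang r)" if "r \<in> R" for r c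
    using proj[rule_format, OF that, of "set_decode c"] up[rule_format, OF that, of "set_decode c"]
    by simp_all
  ultimately show thesis by (intro that[of proj up inter] trio_operations.intro) auto
qed

definition candidate :: "nat \<Rightarrow> nat \<Rightarrow> nat list" where
  "candidate a y = map (digit a y) [0..<card_code a]"

lemma marking_candidate: "marking (set_decode a) a (card_code a) (candidate a y)"
proof
  show "length (candidate a y) = card_code a" by (simp add: candidate_def)
  show "e \<in> set_decode a \<Longrightarrow> e < a" for e by (rule set_decode_less)
  fix j assume "j < card_code a"
  then have "a \<noteq> 0" by (cases "a = 0") (auto simp: card_code_eq)
  then show "candidate a y ! j < a" using \<open>j < card_code a\<close> by (simp add: candidate_def digit_def)
qed

definition marker_code :: "nat \<Rightarrow> nat" where "marker_code a = interval_code a (card_code a)"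

context trio_operations
begin

definition query_lang_code :: "nat \<Rightarrow> nat \<Rightarrow> nat \<Rightarrow> nat" where
  "query_lang_code r a y = proj (prod_encode (inter (prod_encode (up (prod_encode (r, marker_code a)),
     marking_nfa_code a (card_code a) y)), marker_code a))"

lemma query_lang_code:
  assumes "r \<in> R"
  shows "query_lang_code r a y \<in> R"
    and "lang (query_lang_code r a y) =
      marking.marked_lang (set_decode a) a (card_code a) (candidate a y) (lang r)"
proof -
  interpret marking "set_decode a" a "card_code a" "candidate a y" by (rule marking_candidate)
  show "query_lang_code r a y \<in> R"
    "lang (query_lang_code r a y) = marked_lang (lang r)"
    using up[OF assms] inter proj
    unfolding query_lang_code_def marked_lang_def marker_code_def interval_code_eq
    by (simp_all add: nfa_lang_marking_nfa_code candidate_def)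
qed

definition sup_query :: "nat \<Rightarrow> nat \<Rightarrow> nat \<Rightarrow> nat" where
  "sup_query r a y = prod_encode (query_lang_code r a y, marker_code a)"

lemma query_in_sup_inputs:
  assumes "r \<in> R"
  shows "sup_query r a y \<in> sup_inputs R lang"
proof -
  interpret marking "set_decode a" a "card_code a" "candidate a y" by (rule marking_candidate)
  have "lang (query_lang_code r a y) \<subseteq> lists C \<inter> bounded_lang [a..<a + card_code a]"
    using query_lang_code(2)[OF assms] marked_lang_bounded by simp
  then show ?thesis
    unfolding sup_query_def sup_inputs_def marker_code_def interval_code_eq
    using query_lang_code(1)[OF assms]
    by (intro CollectI exI[of _ "query_lang_code r a y"] exI[of _ C] conjI
        exI[of _ "[a..<a + card_code a]"]) auto
qed

lemma diag_answer_query: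
  assumes "r \<in> R"
  shows "diag_answer lang (sup_query r a y) \<longleftrightarrow>
    diagonal (marking.marked_lang (set_decode a) a (card_code a) (candidate a y) (lang r))
      {a..<a + card_code a}"
  unfolding sup_query_def marker_code_def interval_code_eq
  by (simp add: diag_answer_prod_encode query_lang_code(2)[OF assms])

lemma diagonal_iff_query:
  assumes "r \<in> R" "lang r \<subseteq> lists (set_decode a)"
  shows "diagonal (lang r) (set_decode a) \<longleftrightarrow>
    (\<exists>y < a ^ card_code a. enumeration_defect a (card_code a) y = 0 \<and> diag_answer lang (sup_query r a y))"
    (is "?diagonal \<longleftrightarrow> ?query")
proof
  assume ?diagonal
  then obtain bs where bs: "distinct bs" "set bs = set_decode a" "\<forall>m. has_blocks (lang r) bs m"
    using diagonal_imp_has_blocks[OF finite_set_decode] by blast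
  have len: "length bs = card_code a"
    using distinct_card[OF bs(1)] unfolding card_code_eq bs(2)[symmetric] by simp
  define y where "y = from_digits a bs"
  note y = enumeration_defect_from_digits[OF bs(1,2), folded y_def, unfolded len]
  interpret marking "set_decode a" a "card_code a" "candidate a y" by (rule marking_candidate)
  have "candidate a y = bs" using y(2) unfolding candidate_def .
  then have "diagonal (marked_lang (lang r)) C"
    using marked_lang_witness[OF assms(2)] bs(3) unfolding diagonal_def by simp
  then show ?query
    using y(1,3) diag_answer_query[OF assms(1)] by blast
next
  assume ?query
  then obtain y where y: "enumeration_defect a (card_code a) y = 0"
    "diag_answer lang (sup_query r a y)" by blast
  interpret marking "set_decode a" a "card_code a" "candidate a y" by (rule marking_candidate)
  have "set (candidate a y) = set_decode a"
    using enumeration_defect_eq_0_imp[OF y(1)] unfolding candidate_def card_code_eq by simp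
  then show ?diagonal
    using diagonal_of_marked_lang y(2) diag_answer_query[OF assms(1)] by simp
qed

lemma comp_on_marker_code [intro]: "comp_on D f \<Longrightarrow> comp_on D (\<lambda>x. marker_code (f x))"
  unfolding marker_code_def by (intro comp_on_interval_code comp_on_card_code)

lemma comp_on_sup_query:
  assumes "comp_on D f" "comp_on D g" "comp_on D h" and R: "\<And>x. x \<in> D \<Longrightarrow> f x \<in> R"
  shows "comp_on D (\<lambda>x. sup_query (f x) (g x) (h x))"
proof -
  let ?up = "\<lambda>x. up (prod_encode (f x, marker_code (g x)))"
  let ?inter = "\<lambda>x. inter (prod_encode (?up x, marking_nfa_code (g x) (card_code (g x)) (h x)))"
  have "comp_on D ?up"
    by (rule comp_on_compose[OF comp_on_up])
      (use assms in \<open>auto intro!: comp_on_prod_encode comp_on_marker_code\<close>)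
  then have "comp_on D ?inter"
    by (rule comp_on_compose[OF comp_on_inter, OF comp_on_prod_encode])
      (use assms up in \<open>auto intro!: comp_on_marking_nfa_code comp_on_card_code\<close>)
  then have "comp_on D (\<lambda>x. query_lang_code (f x) (g x) (h x))"
    unfolding query_lang_code_def
    by (rule comp_on_compose[OF comp_on_proj, OF comp_on_prod_encode])
      (use assms up inter in \<open>auto intro!: comp_on_marker_code\<close>)
  then show ?thesis
    unfolding sup_query_def using assms(2) by (intro comp_on_prod_encode comp_on_marker_code)
qed

lemma diag_inputs_components:
  assumes "x \<in> diag_inputs R lang"
  shows "pfst x \<in> R" "lang (pfst x) \<subseteq> lists (set_decode (psnd x))"
    and "diag_answer lang x \<longleftrightarrow> diagonal (lang (pfst x)) (set_decode (psnd x))"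
  using assms unfolding diag_inputs_def by (auto simp: diag_answer_prod_encode)

text \<open>The candidate enumerations are the base-\<open>a\<close> digit lists of the numbers \<open>y < a ^ n\<close>. Every query,
  even for a non-enumeration \<open>y\<close>, is a SUP instance, so the SUP procedure is total on the search.\<close>

lemma decidable_diagonal:
  assumes "decidable_on (sup_inputs R lang) (diag_answer lang)"
  shows "decidable_on (diag_inputs R lang) (diag_answer lang)"
proof -
  obtain sup where comp_sup: "comp_on (sup_inputs R lang) sup"
    and sup: "\<And>x. x \<in> sup_inputs R lang \<Longrightarrow> sup x \<noteq> 0 \<longleftrightarrow> diag_answer lang x"
    using assms unfolding decidable_on_def by blast
  define test where "test y x = (if enumeration_defect (psnd x) (card_code (psnd x)) y = 0
    then sup (sup_query (pfst x) (psnd x) y) else 0)" for y x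
  define E where "E = {z. psnd z \<in> diag_inputs R lang}"
  have "comp_on E (\<lambda>z. sup (sup_query (pfst (psnd z)) (psnd (psnd z)) (pfst z)))"
    by (rule comp_on_compose[OF comp_sup])
      (use diag_inputs_components(1) query_in_sup_inputs in
        \<open>auto simp: E_def intro!: comp_on_sup_query comp_on_pfst comp_on_psnd comp_on_id\<close>)
  then have "comp_on E (\<lambda>z. test (pfst z) (psnd z))"
    unfolding test_def
    by (intro comp_on_if_zero comp_on_enumeration_defect comp_on_card_code comp_on_psnd comp_on_pfst
        comp_on_id comp_on_const)
  then have "comp_on (diag_inputs R lang) (\<lambda>x. \<Sum>y < psnd x ^ card_code (psnd x). test y x)"
    by (rule comp_on_sum[rotated])
      (auto simp: E_def intro!: comp_on_power comp_on_card_code comp_on_psnd comp_on_id)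
  moreover have "(\<Sum>y < psnd x ^ card_code (psnd x). test y x) \<noteq> 0 \<longleftrightarrow> diag_answer lang x"
    if "x \<in> diag_inputs R lang" for x
    using diag_inputs_components[OF that] diagonal_iff_query sup query_in_sup_inputs
    unfolding test_def by auto
  ultimately show ?thesis unfolding decidable_on_def by blast
qed

end

theorem lemma4p2:
  fixes R :: "nat set" and lang :: "nat \<Rightarrow> nat list set"
  assumes "full_trio R lang"
    and "decidable_on (sup_inputs R lang) (diag_answer lang)"
  shows "decidable_on (diag_inputs R lang) (diag_answer lang)"
proof -
  obtain proj up inter where "trio_operations R lang proj up inter"
    using assms(1) by (rule full_trio_operations)
  then show ?thesis using assms(2) by (rule trio_operations.decidable_diagonal)
qed

end
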